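(* Let $\lambda>0$ and let $\gamma(a,x)=\int_0^x e^{-t}t^{a-1}\,dt$ denote the incomplete gamma function. For every $y>0$, $$\int_0^1\frac{\gamma(y,yt)}{\Gamma(y)}\,t^{\lambda-1}\,dt+\int_1^\infty\Big(\frac{\gamma(y,yt)}{\Gamma(y)}-1\Big)t^{\lambda-1}\,dt=\frac{1}{\lambda}\Big(1-\frac{1}{g_\lambda(y)}\Big),$$ where $g_\lambda(y)=\frac{y^{\lambda}\Gamma(y)}{\Gamma(\lambda+y)}$. *)

theory Defs
  imports "HOL-Analysis.Analysis"
begin

definition lower_inc_gamma :: "real \<Rightarrow> real \<Rightarrow> real" where
  "lower_inc_gamma a x = integral {0..x} (\<lambda>t. exp (-t) * t powr (a - 1))"

definition g_lam :: "real \<Rightarrow> real \<Rightarrow> real" where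
  "g_lam lam y = y powr lam * Gamma y / Gamma (lam + y)"

end

theory Submission
  imports Defs
begin

text \<open>Integrating by parts against \<open>t\<^sup>\<lambda>/\<lambda>\<close> reduces both integrals to integrals of
  \<open>t\<^sup>\<lambda> d/dt \<gamma>(y, y t)\<close>, and \<open>t\<^sup>\<lambda> d/dt \<gamma>(a, c t) = c\<^sup>-\<^sup>\<lambda> d/dt \<gamma>(a + \<lambda>, c t)\<close>; so both
  integrands have explicit primitives in terms of \<open>\<gamma>(y, y t)\<close> and \<open>\<gamma>(y + \<lambda>, y t)\<close>, and the
  constants combine to \<open>(1 - \<Gamma>(y + \<lambda>) / (y\<^sup>\<lambda> \<Gamma>(y))) / \<lambda>\<close>. The boundary term
  \<open>t\<^sup>\<lambda> (\<Gamma>(a) - \<gamma>(a, t))\<close> at infinity vanishes because it is bounded by the tail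
  \<open>\<Gamma>(a + \<lambda>) - \<gamma>(a + \<lambda>, t)\<close>.\<close>

lemma Gamma_integrand_has_integral:
  fixes a :: real
  assumes "a > 0"
  shows "((\<lambda>t. exp (-t) * t powr (a - 1)) has_integral Gamma a) {0..}"
  using Gamma_integral_real[OF assms] by (simp add: exp_minus field_simps)

lemma Gamma_integrand_integrable_on_atLeast:
  fixes a u :: real
  assumes "a > 0" and "u \<ge> 0"
  shows "(\<lambda>t. exp (-t) * t powr (a - 1)) integrable_on {u..}"
proof -
  have "(\<lambda>t. exp (-t) * t powr (a - 1)) absolutely_integrable_on {0..}"
    using Gamma_integrand_has_integral[OF assms(1)]
    by (intro nonnegative_absolutely_integrable_1) (auto simp: integrable_on_def)
  then have "set_integrable lebesgue {u..} (\<lambda>t. exp (-t) * t powr (a - 1))"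
    by (rule set_integrable_subset) (use assms(2) in auto)
  then show ?thesis
    by (rule set_lebesgue_integral_eq_integral(1))
qed

lemma Gamma_integrand_integrable_on_Icc:
  fixes a x :: real
  assumes "a > 0"
  shows "(\<lambda>t. exp (-t) * t powr (a - 1)) integrable_on {0..x}"
  using Gamma_integrand_integrable_on_atLeast[OF assms order_refl]
  by (rule integrable_on_subinterval) auto

lemma lower_inc_gamma_0 [simp]: "lower_inc_gamma a 0 = 0"
  by (simp add: lower_inc_gamma_def)

lemma Gamma_minus_lower_inc_gamma_has_integral:
  fixes a u :: real
  assumes "a > 0" and "u \<ge> 0"
  shows "((\<lambda>t. exp (-t) * t powr (a - 1)) has_integral (Gamma a - lower_inc_gamma a u)) {u..}"
proof -
  let ?f = "\<lambda>t. exp (-t) * t powr (a - 1)"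
  obtain I where I: "(?f has_integral I) {u..}"
    using Gamma_integrand_integrable_on_atLeast[OF assms] by blast
  have "(?f has_integral (lower_inc_gamma a u + I)) ({0..u} \<union> {u..})"
    unfolding lower_inc_gamma_def
  proof (intro has_integral_Un I integrable_integral Gamma_integrand_integrable_on_Icc assms(1))
    have "{0..u} \<inter> {u..} = {u}"
      using assms(2) by auto
    then show "negligible ({0..u} \<inter> {u..})"
      by simp
  qed
  moreover have "{0..u} \<union> {u..} = {0..}"
    using assms(2) by auto
  ultimately have "lower_inc_gamma a u + I = Gamma a"
    using Gamma_integrand_has_integral[OF assms(1)] has_integral_unique by metis
  then have "I = Gamma a - lower_inc_gamma a u"
    by simp
  with I show ?thesis
    by simp
qed

lemma lower_inc_gamma_le_Gamma:
  fixes a x :: real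
  assumes "a > 0" and "x \<ge> 0"
  shows "lower_inc_gamma a x \<le> Gamma a"
  using has_integral_nonneg[OF Gamma_minus_lower_inc_gamma_has_integral[OF assms]] by simp

lemma lower_inc_gamma_tendsto_Gamma:
  fixes a :: real
  assumes "a > 0"
  shows "(lower_inc_gamma a \<longlongrightarrow> Gamma a) at_top"
proof -
  let ?f = "\<lambda>t. exp (-t) * t powr (a - 1)"
  have f: "set_integrable lebesgue {0..} ?f"
    using Gamma_integrand_integrable_on_atLeast[OF assms order_refl]
    by (intro nonnegative_absolutely_integrable_1) auto
  have "((\<lambda>x. set_lebesgue_integral lebesgue {0..x} ?f) \<longlongrightarrow> set_lebesgue_integral lebesgue {0..} ?f) at_top"
    by (rule tendsto_set_lebesgue_integral_at_top[OF _ f]) auto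
  moreover have "set_lebesgue_integral lebesgue {0..} ?f = Gamma a"
    using set_lebesgue_integral_eq_integral(2)[OF f] Gamma_integrand_has_integral[OF assms]
    by (simp add: integral_unique)
  moreover have "set_lebesgue_integral lebesgue {0..x} ?f = lower_inc_gamma a x" for x
  proof -
    have "set_integrable lebesgue {0..x} ?f"
      using f by (rule set_integrable_subset) auto
    then show ?thesis
      unfolding lower_inc_gamma_def by (rule set_lebesgue_integral_eq_integral(2))
  qed
  ultimately show ?thesis
    by simp
qed

lemma lower_inc_gamma_has_real_derivative:
  fixes a x :: real
  assumes "a > 0" and "x > 0"
  shows "(lower_inc_gamma a has_real_derivative exp (-x) * x powr (a - 1)) (at x)"
proof -
  let ?f = "\<lambda>t. exp (-t) * t powr (a - 1)"
  have "((\<lambda>u. integral {0..u} ?f) has_vector_derivative ?f x) (at x within {0..x + 1} - {})"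
  proof (rule integral_has_vector_derivative_continuous_at)
    have "isCont ?f x"
      using assms(2) by (intro continuous_intros) auto
    then show "continuous (at x within {0..x + 1} - {}) ?f"
      by (rule continuous_at_imp_continuous_at_within)
  qed (use assms Gamma_integrand_integrable_on_Icc in auto)
  then have "((\<lambda>u. integral {0..u} ?f) has_vector_derivative ?f x) (at x)"
    using at_within_Icc_at[of 0 x "x + 1"] assms(2) by simp
  then show ?thesis
    unfolding lower_inc_gamma_def by (simp add: has_real_derivative_iff_has_vector_derivative)
qed

lemma lower_inc_gamma_scaled_has_real_derivative:
  fixes a c t :: real
  assumes "a > 0" and "c > 0" and "t > 0"
  shows "((\<lambda>t. lower_inc_gamma a (c * t)) has_real_derivative
           exp (-(c * t)) * (c * t) powr (a - 1) * c) (at t)"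
  by (rule DERIV_chain2[OF lower_inc_gamma_has_real_derivative DERIV_cmult_Id])
    (use assms in simp_all)

lemma continuous_on_lower_inc_gamma_scaled:
  fixes a b c :: real
  assumes "a > 0" and "c \<ge> 0"
  shows "continuous_on {0..b} (\<lambda>t. lower_inc_gamma a (c * t))"
proof (rule continuous_on_compose2[of "{0..c * b}" "lower_inc_gamma a"])
  show "continuous_on {0..c * b} (lower_inc_gamma a)"
    unfolding lower_inc_gamma_def
    by (rule indefinite_integral_continuous_1[OF Gamma_integrand_integrable_on_Icc[OF assms(1)]])
  show "(*) c ` {0..b} \<subseteq> {0..c * b}"
    using assms(2) by (auto intro: mult_left_mono)
qed (intro continuous_intros)

lemma Gamma_minus_lower_inc_gamma_powr_le:
  fixes a lam u :: real
  assumes "a > 0" and "lam \<ge> 0" and "u \<ge> 0"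
  shows "u powr lam * (Gamma a - lower_inc_gamma a u)
           \<le> Gamma (a + lam) - lower_inc_gamma (a + lam) u"
proof (rule has_integral_le)
  show "((\<lambda>t. u powr lam * (exp (-t) * t powr (a - 1))) has_integral
          u powr lam * (Gamma a - lower_inc_gamma a u)) {u..}"
    by (intro has_integral_mult_right Gamma_minus_lower_inc_gamma_has_integral assms(1,3))
  show "((\<lambda>t. exp (-t) * t powr (a + lam - 1)) has_integral
          Gamma (a + lam) - lower_inc_gamma (a + lam) u) {u..}"
    by (intro Gamma_minus_lower_inc_gamma_has_integral) (use assms in auto)
  fix t assume "t \<in> {u..}"
  then have "u powr lam \<le> t powr lam"
    using assms by (intro powr_mono2) auto
  moreover have "t powr (a + lam - 1) = t powr lam * t powr (a - 1)"
    by (simp add: powr_add[symmetric] algebra_simps)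
  ultimately show "u powr lam * (exp (-t) * t powr (a - 1)) \<le> exp (-t) * t powr (a + lam - 1)"
    by (simp add: mult_right_mono)
qed

lemma tendsto_powr_mult_Gamma_minus_lower_inc_gamma:
  fixes a lam :: real
  assumes "a > 0" and "lam \<ge> 0"
  shows "((\<lambda>u. u powr lam * (Gamma a - lower_inc_gamma a u)) \<longlongrightarrow> 0) at_top"
proof (rule tendsto_sandwich)
  show "\<forall>\<^sub>F u in at_top. 0 \<le> u powr lam * (Gamma a - lower_inc_gamma a u)"
    using eventually_ge_at_top[of 0]
    by eventually_elim (use lower_inc_gamma_le_Gamma[OF assms(1)] in simp)
  show "\<forall>\<^sub>F u in at_top. u powr lam * (Gamma a - lower_inc_gamma a u)
          \<le> Gamma (a + lam) - lower_inc_gamma (a + lam) u"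
    using eventually_ge_at_top[of 0]
    by eventually_elim (rule Gamma_minus_lower_inc_gamma_powr_le[OF assms])
  have "((\<lambda>u. Gamma (a + lam) - lower_inc_gamma (a + lam) u) \<longlongrightarrow>
          Gamma (a + lam) - Gamma (a + lam)) at_top"
    by (intro tendsto_diff tendsto_const lower_inc_gamma_tendsto_Gamma) (use assms in simp)
  then show "((\<lambda>u. Gamma (a + lam) - lower_inc_gamma (a + lam) u) \<longlongrightarrow> 0) at_top"
    by simp
qed simp

text \<open>A primitive of \<open>\<gamma>(a, c t) t\<^sup>\<lambda>\<^sup>-\<^sup>1\<close> obtained by integration by parts.\<close>

definition lower_inc_gamma_powr_primitive :: "real \<Rightarrow> real \<Rightarrow> real \<Rightarrow> real \<Rightarrow> real" where
  "lower_inc_gamma_powr_primitive a lam c t =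
     (lower_inc_gamma a (c * t) * t powr lam - lower_inc_gamma (a + lam) (c * t) / c powr lam) / lam"

lemma lower_inc_gamma_powr_primitive_has_real_derivative:
  fixes a lam c t :: real
  assumes "a > 0" and "lam > 0" and "c > 0" and "t > 0"
  shows "(lower_inc_gamma_powr_primitive a lam c has_real_derivative
           lower_inc_gamma a (c * t) * t powr (lam - 1)) (at t)"
proof -
  define D where "D = exp (-(c * t)) * (c * t) powr (a - 1) * c"
  have "(c * t) powr (a + lam - 1) = c powr lam * t powr lam * (c * t) powr (a - 1)"
    using assms by (simp add: powr_add[symmetric] powr_mult algebra_simps)
  then have shifted: "exp (-(c * t)) * (c * t) powr (a + lam - 1) * c / c powr lam = t powr lam * D"
    using assms(3) by (simp add: D_def field_simps)
  have "((\<lambda>t. lower_inc_gamma a (c * t) * t powr lam) has_real_derivative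
          D * t powr lam + lam * t powr (lam - 1) * lower_inc_gamma a (c * t)) (at t)"
    unfolding D_def
    by (intro DERIV_mult has_real_derivative_powr lower_inc_gamma_scaled_has_real_derivative assms)
  moreover have "((\<lambda>t. lower_inc_gamma (a + lam) (c * t) / c powr lam) has_real_derivative
          t powr lam * D) (at t)"
    unfolding shifted[symmetric]
    by (intro DERIV_cdivide lower_inc_gamma_scaled_has_real_derivative) (use assms in auto)
  ultimately have "(lower_inc_gamma_powr_primitive a lam c has_real_derivative
          (D * t powr lam + lam * t powr (lam - 1) * lower_inc_gamma a (c * t) - t powr lam * D) / lam) (at t)"
    unfolding lower_inc_gamma_powr_primitive_def by (intro DERIV_cdivide DERIV_diff)
  then show ?thesis
    using assms(2) by (simp add: algebra_simps)
qed

lemma continuous_on_lower_inc_gamma_powr_primitive: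
  fixes a lam b c :: real
  assumes "a > 0" and "lam > 0" and "c > 0"
  shows "continuous_on {0..b} (lower_inc_gamma_powr_primitive a lam c)"
  unfolding lower_inc_gamma_powr_primitive_def
  by (intro continuous_intros continuous_on_lower_inc_gamma_scaled continuous_on_powr')
    (use assms in auto)

lemma lower_inc_gamma_powr_has_integral:
  fixes a lam b c :: real
  assumes "a > 0" and "lam > 0" and "c > 0" and "b \<ge> 0"
  shows "((\<lambda>t. lower_inc_gamma a (c * t) * t powr (lam - 1)) has_integral
           lower_inc_gamma_powr_primitive a lam c b) {0..b}"
proof -
  have "((\<lambda>t. lower_inc_gamma a (c * t) * t powr (lam - 1)) has_integral
          lower_inc_gamma_powr_primitive a lam c b - lower_inc_gamma_powr_primitive a lam c 0) {0..b}"
  proof (rule fundamental_theorem_of_calculus_interior)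
    show "continuous_on {0..b} (lower_inc_gamma_powr_primitive a lam c)"
      by (rule continuous_on_lower_inc_gamma_powr_primitive[OF assms(1-3)])
    show "(lower_inc_gamma_powr_primitive a lam c has_vector_derivative
            lower_inc_gamma a (c * t) * t powr (lam - 1)) (at t)" if "t \<in> {0<..<b}" for t
      using lower_inc_gamma_powr_primitive_has_real_derivative[OF assms(1-3), of t] that
      by (simp add: has_real_derivative_iff_has_vector_derivative)
  qed (rule assms(4))
  then show ?thesis
    by (simp add: lower_inc_gamma_powr_primitive_def)
qed

lemma tendsto_lower_inc_gamma_powr_primitive:
  fixes a lam c :: real
  assumes "a > 0" and "lam > 0" and "c > 0"
  shows "((\<lambda>t. Gamma a * t powr lam / lam - lower_inc_gamma_powr_primitive a lam c t) \<longlongrightarrow>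
           Gamma (a + lam) / (c powr lam * lam)) at_top"
proof -
  have c_at_top: "filterlim (\<lambda>t. c * t) at_top at_top"
    by (rule filterlim_tendsto_pos_mult_at_top[OF tendsto_const assms(3) filterlim_ident])
  have "((\<lambda>t. ((c * t) powr lam * (Gamma a - lower_inc_gamma a (c * t)) / c powr lam
                + lower_inc_gamma (a + lam) (c * t) / c powr lam) / lam) \<longlongrightarrow>
          (0 / c powr lam + Gamma (a + lam) / c powr lam) / lam) at_top"
    by (intro tendsto_intros filterlim_compose[OF tendsto_powr_mult_Gamma_minus_lower_inc_gamma c_at_top]
        filterlim_compose[OF lower_inc_gamma_tendsto_Gamma c_at_top]) (use assms in auto)
  moreover have "\<forall>\<^sub>F t in at_top.
      ((c * t) powr lam * (Gamma a - lower_inc_gamma a (c * t)) / c powr lam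
        + lower_inc_gamma (a + lam) (c * t) / c powr lam) / lam
      = Gamma a * t powr lam / lam - lower_inc_gamma_powr_primitive a lam c t"
    using eventually_gt_at_top[of 0]
    by eventually_elim
      (use assms in \<open>simp add: lower_inc_gamma_powr_primitive_def powr_mult field_simps\<close>)
  ultimately show ?thesis
    by (simp add: tendsto_cong)
qed

lemma Gamma_minus_lower_inc_gamma_powr_has_integral:
  fixes a lam b c :: real
  assumes "a > 0" and "lam > 0" and "c > 0" and "b \<ge> 0"
  shows "((\<lambda>t. (Gamma a - lower_inc_gamma a (c * t)) * t powr (lam - 1)) has_integral
           Gamma (a + lam) / (c powr lam * lam) - Gamma a * b powr lam / lam
             + lower_inc_gamma_powr_primitive a lam c b) {b..}"
proof -
  define H where "H t = Gamma a * t powr lam / lam - lower_inc_gamma_powr_primitive a lam c t" for t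
  let ?h = "\<lambda>t. (Gamma a - lower_inc_gamma a (c * t)) * t powr (lam - 1)"
  have H_integral: "(?h has_integral H x - H b) {b..x}" if "b \<le> x" for x
  proof (rule fundamental_theorem_of_calculus_interior[OF that])
    have "continuous_on {0..x} H"
      unfolding H_def
      by (intro continuous_intros continuous_on_powr' continuous_on_lower_inc_gamma_powr_primitive)
        (use assms in auto)
    then show "continuous_on {b..x} H"
      by (rule continuous_on_subset) (use assms(4) in auto)
    show "(H has_vector_derivative ?h t) (at t)" if "t \<in> {b<..<x}" for t
    proof -
      have "t > 0"
        using that assms(4) by simp
      have "(H has_real_derivative Gamma a * (lam * t powr (lam - 1)) / lam
              - lower_inc_gamma a (c * t) * t powr (lam - 1)) (at t)"
        unfolding H_def
        by (intro DERIV_diff DERIV_cdivide DERIV_cmult has_real_derivative_powr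
            lower_inc_gamma_powr_primitive_has_real_derivative assms \<open>t > 0\<close>)
      then show ?thesis
        using assms(2) by (simp add: has_real_derivative_iff_has_vector_derivative algebra_simps)
    qed
  qed
  have "(?h has_integral Gamma (a + lam) / (c powr lam * lam) - H b) {b..}"
  proof (rule has_integral_to_inf)
    show "?h integrable_on {b..x}" for x
      using H_integral[of x] by (cases "b \<le> x") auto
    have "((\<lambda>x. H x - H b) \<longlongrightarrow> Gamma (a + lam) / (c powr lam * lam) - H b) at_top"
      unfolding H_def by (intro tendsto_diff tendsto_const tendsto_lower_inc_gamma_powr_primitive assms)
    moreover have "\<forall>\<^sub>F x in at_top. H x - H b = integral {b..x} ?h"
      using eventually_ge_at_top[of b] by eventually_elim (use H_integral integral_unique in metis)
    ultimately show "((\<lambda>x. integral {b..x} ?h) \<longlongrightarrow> Gamma (a + lam) / (c powr lam * lam) - H b) at_top"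
      by (rule Lim_transform_eventually)
    show "?h t \<ge> 0" if "t \<ge> b" for t
      using lower_inc_gamma_le_Gamma[OF assms(1), of "c * t"] that assms by simp
  qed
  then show ?thesis
    by (simp add: H_def algebra_simps)
qed

theorem lemma2p2:
  fixes lam y :: real
  assumes "lam > 0" and "y > 0"
  shows "\<exists>A B.
     ((\<lambda>t. lower_inc_gamma y (y * t) / Gamma y * t powr (lam - 1)) has_integral A) {0..1} \<and>
     ((\<lambda>t. (lower_inc_gamma y (y * t) / Gamma y - 1) * t powr (lam - 1)) has_integral B) {1..} \<and>
     A + B = 1 / lam * (1 - 1 / g_lam lam y)"
proof (intro exI conjI)
  let ?G = "lower_inc_gamma_powr_primitive y lam y 1"
  let ?B = "Gamma (y + lam) / (y powr lam * lam) - Gamma y / lam + ?G"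
  have "Gamma y \<noteq> 0"
    using Gamma_real_pos[OF assms(2)] by linarith
  show "((\<lambda>t. lower_inc_gamma y (y * t) / Gamma y * t powr (lam - 1)) has_integral ?G / Gamma y) {0..1}"
    using has_integral_divide[OF lower_inc_gamma_powr_has_integral[OF assms(2,1,2)], of 1 "Gamma y"]
    by simp
  have "(\<lambda>t. (lower_inc_gamma y (y * t) / Gamma y - 1) * t powr (lam - 1))
        = (\<lambda>t. - ((Gamma y - lower_inc_gamma y (y * t)) * t powr (lam - 1) / Gamma y))"
    using \<open>Gamma y \<noteq> 0\<close> by (simp add: fun_eq_iff field_simps)
  then show "((\<lambda>t. (lower_inc_gamma y (y * t) / Gamma y - 1) * t powr (lam - 1))
               has_integral - (?B / Gamma y)) {1..}"
    using Gamma_minus_lower_inc_gamma_powr_has_integral[OF assms(2,1,2), of 1]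
    by (simp only:) (intro has_integral_neg has_integral_divide, simp)
  show "?G / Gamma y + - (?B / Gamma y) = 1 / lam * (1 - 1 / g_lam lam y)"
    using assms \<open>Gamma y \<noteq> 0\<close> by (simp add: g_lam_def add.commute field_simps)
qed

end
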